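(* Let $n\ge2$, $\pi\in\mathrm{Eq}(\mathsf{D}_n)$, and let $\mathbf{u}\approx\mathbf{v}$ be an identity satisfied by $\mathbf{C}_n\{\mathsf{Id}(\pi)\}$. (i) If $\mathbf{u}$ is a $(2n-1)$-limited cube-free rigid word, then $\mathbf{v}$ is also a $(2n-1)$-limited cube-free rigid word. (ii) If $\mathbf{u}\in\mathsf{D}_n$, then $\mathbf{v}\in\mathsf{D}_n$ and $(\mathbf{u},\mathbf{v})\in\pi$.
   Context: All varieties are varieties of monoids (signature: associative binary operation and identity constant $1$). Words are elements of the free monoid $X^*$ over a countably infinite set $X$ of variables; identities are pairs of words, and variables may be substituted by $1$. $\mathbf{V}\Sigma$ is the subvariety of $\mathbf{V}$ defined by $\Sigma$. $\mathbf{O}$ is the variety defined by $xyt_1xt_2y \approx yxt_1xt_2y$, $xt_1xyt_2y \approx xt_1yxt_2y$, $xt_1yt_2xy \approx xt_1yt_2yx$. For $n\ge2$, $\mathbf{C}_n=\mathbf{O}\{x^4\approx x^3,\ x^3t\approx tx^3,\ x^{2n}t_1\cdots t_{2n}\approx t_1x\cdots t_{2n}x\}$. For $0\le j\le n-1$, $\mathbf{d}_j = x^{a_0}t_1x^{a_1}\cdots t_{n-1}x^{a_{n-1}}$ with $a_j=1$, $a_i=2$ for $i\ne j$; $\mathsf{D}_n=\{\mathbf{d}_0,\dots,\mathbf{d}_{n-1}\}$. $\mathrm{Eq}(\mathsf{W})$ is the lattice of equivalence relations on $\mathsf{W}$ and $\mathsf{Id}(\pi)=\{\mathbf{u}\approx\mathbf{v}:(\mathbf{u},\mathbf{v})\in\pi\}$.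 A rigid word is $x^{e_0}t_1x^{e_1}\cdots t_rx^{e_r}$ with $r\ge0$, $e_i\ge0$, $x,t_1,\ldots,t_r$ distinct variables; it is $k$-limited if $\sum e_i\le k$ and cube-free if all $e_i<3$. *)

theory Defs
  imports "HOL-Algebra.Group"
begin

type_synonym word = "nat list"
type_synonym identity = "word \<times> word"

text \<open>Value of a word in a monoid under an assignment of the variables.
  Assignments may send variables to the identity element.\<close>
definition eval_word :: "('a, 'b) monoid_scheme \<Rightarrow> (nat \<Rightarrow> 'a) \<Rightarrow> word \<Rightarrow> 'a" where
  "eval_word M h w = foldr (\<lambda>x a. h x \<otimes>\<^bsub>M\<^esub> a) w \<one>\<^bsub>M\<^esub>"

definition sat_id :: "('a, 'b) monoid_scheme \<Rightarrow> identity \<Rightarrow> bool" where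
  "sat_id M p \<longleftrightarrow> (\<forall>h. (\<forall>x. h x \<in> carrier M) \<longrightarrow> eval_word M h (fst p) = eval_word M h (snd p))"

definition in_variety :: "identity set \<Rightarrow> ('a, 'b) monoid_scheme \<Rightarrow> bool" where
  "in_variety \<Sigma> M \<longleftrightarrow> monoid M \<and> (\<forall>p\<in>\<Sigma>. sat_id M p)"

text \<open>Monoids are taken
  with carrier inside the countably infinite type nat; this suffices since the
  relatively free monoid of countable rank of any variety is countable.\<close>
definition variety_satisfies :: "identity set \<Rightarrow> identity \<Rightarrow> bool" where
  "variety_satisfies \<Sigma> p \<longleftrightarrow> (\<forall>M :: nat monoid. in_variety \<Sigma> M \<longrightarrow> sat_id M p)"

text \<open>Identities defining O (x = 0, y = 1, t1 = 2, t2 = 3).\<close>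
definition O_ids :: "identity set" where
  "O_ids = { ([0,1,2,0,3,1], [1,0,2,0,3,1]),
             ([0,2,0,1,3,1], [0,2,1,0,3,1]),
             ([0,2,1,3,0,1], [0,2,1,3,1,0]) }"

text \<open>Identities defining C_n within O (x = 0, t = 1, t_i = i).\<close>
definition C_ids :: "nat \<Rightarrow> identity set" where
  "C_ids n = O_ids \<union>
     { (replicate 4 0, replicate 3 0),
       (replicate 3 0 @ [1], [1] @ replicate 3 0),
       (replicate (2*n) 0 @ [1..<2*n+1], concat (map (\<lambda>i. [i, 0]) [1..<2*n+1])) }"

text \<open>d_j = x^{a_0} t_1 x^{a_1} ... t_{n-1} x^{a_{n-1}}, with x = 0, t_i = i,
  a_j = 1 and a_i = 2 otherwise.\<close>
definition d_word :: "nat \<Rightarrow> nat \<Rightarrow> word" where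
  "d_word n j = concat (map (\<lambda>i. (if i = 0 then [] else [i]) @ replicate (if i = j then 1 else 2) 0) [0..<n])"

definition D_set :: "nat \<Rightarrow> word set" where
  "D_set n = {d_word n j | j. j < n}"

definition Id_of :: "(word \<times> word) set \<Rightarrow> identity set" where
  "Id_of \<pi> = {(u, v). (u, v) \<in> \<pi>}"

text \<open>Rigid word x^{e_0} t_1 x^{e_1} ... t_r x^{e_r}.\<close>
definition rigid_form :: "nat \<Rightarrow> nat list \<Rightarrow> nat list \<Rightarrow> word" where
  "rigid_form x ts es = replicate (es ! 0) x @
     concat (map (\<lambda>i. ts ! i # replicate (es ! Suc i) x) [0..<length ts])"

definition limited_cubefree_rigid :: "nat \<Rightarrow> word \<Rightarrow> bool" where
  "limited_cubefree_rigid k w \<longleftrightarrow>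
     (\<exists>x ts es. distinct (x # ts) \<and> length es = Suc (length ts) \<and>
        w = rigid_form x ts es \<and> sum_list es \<le> k \<and> (\<forall>e\<in>set es. e < 3))"

end

theory Submission
  imports Defs "HOL-Library.Countable"
begin

text \<open>
  Everything is read off from one monoid of C_n{Id(pi)}: the quotient of the free monoid in which
  every word outside the set W of (2n-1)-limited cube-free rigid words becomes a zero, while two
  words of W are identified only if they are equal, or if both contain a letter x exactly 2n-1
  times, have the same letters besides x in the same order, the same empty x-blocks, and nonempty
  x-exponent sequences d_j and d_k with d_j pi d_k.
  In a word of W only x repeats, so two factors made of repeated letters are powers of x and
  commute; this gives the identities of O.  The remaining identities of C_n force x to be sent to
  the empty word before a substitution instance lands in W.  An instance of d_j lands in W only
  if x goes to the empty word or to a single letter, and then the instance of d_k differs from it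
  exactly by the exponent sequence d_k in place of d_j; this gives Id(pi).
  Now if u is in W, substituting cubes for the letters of v that are missing from u shows that v is
  in W and has the class of u, which is (i); for u = d_j the class of u forces v = d_k with
  d_j pi d_k, which is (ii).
\<close>

section \<open>Runs of a letter\<close>

(* For w = x^e0 t1 x^e1 ... tr x^er with all ti different from x, runs x w = [e0, e1, ..., er]. *)
fun runs :: "'a \<Rightarrow> 'a list \<Rightarrow> nat list" where
  "runs x [] = [0]"
| "runs x (a # w) = (if a = x then Suc (hd (runs x w)) # tl (runs x w) else 0 # runs x w)"

fun rigid_word :: "'a \<Rightarrow> 'a list \<Rightarrow> nat list \<Rightarrow> 'a list" where
  "rigid_word x [] es = replicate (hd es) x"
| "rigid_word x (t # ts) es = replicate (hd es) x @ t # rigid_word x ts (tl es)"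

lemma runs_not_Nil [simp]: "runs x w \<noteq> []"
  by (induction w) auto

lemma length_runs: "length (runs x w) = Suc (length (filter (\<lambda>y. y \<noteq> x) w))"
  by (induction w) auto

lemma sum_list_runs: "sum_list (runs x w) = count_list w x"
proof (induction w)
  case (Cons a w) then show ?case by (cases "runs x w") auto
qed simp

lemma rigid_word_runs: "rigid_word x (filter (\<lambda>y. y \<noteq> x) w) (runs x w) = w"
proof (induction w)
  case (Cons a w)
  have "rigid_word x ts (Suc e # es) = x # rigid_word x ts (e # es)" for ts e es
    by (cases ts) auto
  then show ?case
    using Cons by (cases "runs x w") auto
qed simp

lemma eq_if_filter_runs_eq:
  assumes "filter (\<lambda>y. y \<noteq> x) u = filter (\<lambda>y. y \<noteq> x) v" and "runs x u = runs x v"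
  shows "u = v"
proof -
  have "u = rigid_word x (filter (\<lambda>y. y \<noteq> x) u) (runs x u)" by (simp only: rigid_word_runs)
  also have "\<dots> = rigid_word x (filter (\<lambda>y. y \<noteq> x) v) (runs x v)" by (simp only: assms)
  also have "\<dots> = v" by (rule rigid_word_runs)
  finally show ?thesis .
qed

lemma runs_replicate_append: "runs x (replicate m x @ w) = (m + hd (runs x w)) # tl (runs x w)"
  by (induction m) auto

lemma runs_replicate: "runs x (replicate m x) = [m]"
  using runs_replicate_append[of x m "[]"] by simp

lemma runs_append_free: "x \<notin> set r \<Longrightarrow> runs x (w @ r) = runs x w @ replicate (length r) 0"
proof (induction w)
  case Nil then show ?case by (induction r) auto
next
  case (Cons a w) then show ?case by (cases "runs x w") auto
qed

lemma runs_free_append: "x \<notin> set l \<Longrightarrow> runs x (l @ w) = replicate (length l) 0 @ runs x w"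
  by (induction l) auto

lemma filter_neq_id: "x \<notin> set l \<Longrightarrow> filter (\<lambda>y. y \<noteq> x) l = l"
  by (induction l) auto

lemma runs_infix:
  "x \<notin> set l \<Longrightarrow> x \<notin> set r \<Longrightarrow>
    runs x (l @ w @ r) = replicate (length l) 0 @ runs x w @ replicate (length r) 0"
  by (simp add: runs_free_append runs_append_free)

lemma filter_neq_infix:
  "x \<notin> set l \<Longrightarrow> x \<notin> set r \<Longrightarrow>
    filter (\<lambda>y. y \<noteq> x) (l @ w @ r) = l @ filter (\<lambda>y. y \<noteq> x) w @ r"
  by (simp add: filter_neq_id)

lemma runs_append:
  "runs x (a @ b) = butlast (runs x a) @ (last (runs x a) + hd (runs x b)) # tl (runs x b)"
proof (induction a)
  case Nil then show ?case by (cases "runs x b") auto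
next
  case (Cons c a)
  obtain e rs where "runs x a = e # rs" by (cases "runs x a") auto
  then show ?case using Cons by (cases rs) auto
qed

lemma runs_rigid_word:
  "x \<notin> set ts \<Longrightarrow> length es = Suc (length ts) \<Longrightarrow> runs x (rigid_word x ts es) = es"
proof (induction ts arbitrary: es)
  case Nil then show ?case using runs_replicate[of x "hd es"] by (cases es) auto
next
  case (Cons t ts)
  then show ?case by (cases es) (auto simp: runs_replicate_append)
qed

lemma filter_rigid_word: "x \<notin> set ts \<Longrightarrow> filter (\<lambda>y. y \<noteq> x) (rigid_word x ts es) = ts"
  by (induction ts arbitrary: es) auto

lemma rigid_form_eq_rigid_word:
  "length es = Suc (length ts) \<Longrightarrow> rigid_form x ts es = rigid_word x ts es"
proof (induction ts arbitrary: es)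
  case Nil then show ?case by (cases es) (auto simp: rigid_form_def)
next
  case (Cons t ts)
  then obtain e es' where es: "es = e # es'" by (cases es) auto
  with Cons have "rigid_form x ts es' = rigid_word x ts es'" by simp
  then show ?case using es by (simp add: rigid_form_def map_upt_Suc del: upt_Suc)
qed

lemma runs_eqI:
  assumes "map (\<lambda>e. e = 0) r = map (\<lambda>e. e = 0) r'"
    and "filter (\<lambda>e. e \<noteq> 0) r = filter (\<lambda>e. e \<noteq> (0::nat)) r'"
  shows "r = r'"
  using assms
proof (induction r arbitrary: r')
  case (Cons e r)
  then show ?case by (cases r') (auto split: if_splits)
qed simp

section \<open>Cube-free rigid words\<close>

definition cubefree_rigid :: "nat \<Rightarrow> 'a list \<Rightarrow> bool" where
  "cubefree_rigid k w \<longleftrightarrow>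
     (\<exists>x. count_list w x \<le> k \<and> distinct (filter (\<lambda>y. y \<noteq> x) w) \<and> (\<forall>e\<in>set (runs x w). e < 3))"

lemma limited_cubefree_rigid_iff: "limited_cubefree_rigid k w \<longleftrightarrow> cubefree_rigid k w"
proof
  assume "limited_cubefree_rigid k w"
  then obtain x ts es where d: "distinct (x # ts)" and l: "length es = Suc (length ts)"
    and w: "w = rigid_form x ts es" and es: "sum_list es \<le> k" "\<forall>e\<in>set es. e < 3"
    unfolding limited_cubefree_rigid_def by blast
  have w': "w = rigid_word x ts es" using w rigid_form_eq_rigid_word[OF l] by simp
  have x: "x \<notin> set ts" using d by simp
  have "runs x w = es" unfolding w' using runs_rigid_word[OF x l] .
  moreover have "filter (\<lambda>y. y \<noteq> x) w = ts" unfolding w' using filter_rigid_word[OF x] .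
  ultimately show "cubefree_rigid k w"
    unfolding cubefree_rigid_def using d es sum_list_runs[of x w] by (intro exI[of _ x]) auto
next
  assume "cubefree_rigid k w"
  then obtain x where "count_list w x \<le> k" "distinct (filter (\<lambda>y. y \<noteq> x) w)"
    "\<forall>e\<in>set (runs x w). e < 3"
    unfolding cubefree_rigid_def by blast
  moreover have "w = rigid_form x (filter (\<lambda>y. y \<noteq> x) w) (runs x w)"
    using rigid_form_eq_rigid_word[OF length_runs] rigid_word_runs by metis
  ultimately show "limited_cubefree_rigid k w"
    unfolding limited_cubefree_rigid_def using length_runs[of x w] sum_list_runs[of x w]
    by (intro exI[of _ x] exI[of _ "filter (\<lambda>y. y \<noteq> x) w"] exI[of _ "runs x w"]) auto
qed

lemma count_list_le_1_if_distinct: "distinct xs \<Longrightarrow> count_list xs a \<le> 1"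
  by (induction xs) auto

lemma eq_if_count_list_ge_2:
  assumes "distinct (filter (\<lambda>y. y \<noteq> x) w)" and "2 \<le> count_list w a"
  shows "a = x"
proof (rule ccontr)
  assume "a \<noteq> x"
  then have "count_list (filter (\<lambda>y. y \<noteq> x) w) a = count_list w a"
    by (induction w) auto
  with assms(2) count_list_le_1_if_distinct[OF assms(1), of a] show False by simp
qed

lemma cubefree_rigid_repeated_letter:
  assumes "cubefree_rigid k w"
  obtains x where "\<And>a. 2 \<le> count_list w a \<Longrightarrow> a = x"
proof -
  obtain x where "distinct (filter (\<lambda>y. y \<noteq> x) w)"
    using assms unfolding cubefree_rigid_def by blast
  then show ?thesis by (rule that[OF eq_if_count_list_ge_2])
qed

lemma cubefree_rigid_witness:
  assumes "cubefree_rigid k w" and "2 \<le> count_list w x"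
  shows "count_list w x \<le> k" and "distinct (filter (\<lambda>y. y \<noteq> x) w)"
    and "\<forall>e\<in>set (runs x w). e < 3"
proof -
  obtain y where y: "count_list w y \<le> k" "distinct (filter (\<lambda>z. z \<noteq> y) w)"
    "\<forall>e\<in>set (runs y w). e < 3"
    using assms(1) unfolding cubefree_rigid_def by blast
  moreover have "x = y" using eq_if_count_list_ge_2[OF y(2) assms(2)] .
  ultimately show "count_list w x \<le> k" "distinct (filter (\<lambda>y. y \<noteq> x) w)"
    "\<forall>e\<in>set (runs x w). e < 3"
    by simp_all
qed

lemma count_list_le_if_cubefree_rigid:
  assumes "cubefree_rigid k w" and "1 \<le> k"
  shows "count_list w a \<le> k"
proof -
  obtain x where x: "count_list w x \<le> k" "distinct (filter (\<lambda>y. y \<noteq> x) w)"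
    using assms(1) unfolding cubefree_rigid_def by blast
  show ?thesis
  proof (cases "a = x")
    case False
    then have "\<not> 2 \<le> count_list w a" using eq_if_count_list_ge_2[OF x(2)] by blast
    with assms(2) show ?thesis by linarith
  qed (use x in simp)
qed

lemma runs_append_less_3:
  assumes "\<forall>e\<in>set (runs x (a @ b)). e < 3"
  shows "\<forall>e\<in>set (runs x a). e < 3" and "\<forall>e\<in>set (runs x b). e < 3"
proof -
  have "set r \<subseteq> insert (last r) (set (butlast r))" for r :: "nat list"
    by (induction r rule: rev_induct) auto
  then show "\<forall>e\<in>set (runs x a). e < 3"
    using assms runs_append[of x a b] by fastforce
  have "set r \<subseteq> insert (hd r) (set (tl r))" for r :: "nat list"
    by (cases r) auto
  then show "\<forall>e\<in>set (runs x b). e < 3"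
    using assms runs_append[of x a b] by fastforce
qed

lemma cubefree_rigid_appendD:
  assumes "cubefree_rigid k (a @ b)"
  shows "cubefree_rigid k a" and "cubefree_rigid k b"
proof -
  obtain x where x: "count_list (a @ b) x \<le> k" "distinct (filter (\<lambda>y. y \<noteq> x) (a @ b))"
    "\<forall>e\<in>set (runs x (a @ b)). e < 3"
    using assms unfolding cubefree_rigid_def by blast
  show "cubefree_rigid k a" "cubefree_rigid k b"
    unfolding cubefree_rigid_def using x runs_append_less_3[OF x(3)]
    by (intro exI[of _ x]; simp)+
qed

lemma cubefree_rigid_infixD: "cubefree_rigid k (a @ b @ c) \<Longrightarrow> cubefree_rigid k b"
  using cubefree_rigid_appendD(1)[of k b c] cubefree_rigid_appendD(2)[of k a "b @ c"] by simp

lemma cubefree_rigid_infix_iff: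
  assumes "cubefree_rigid k w" and "count_list w x = k" and "2 \<le> k"
  shows "cubefree_rigid k (l @ w @ r) \<longleftrightarrow>
    x \<notin> set l \<and> x \<notin> set r \<and> distinct (l @ filter (\<lambda>y. y \<noteq> x) w @ r)"
proof
  assume lwr: "cubefree_rigid k (l @ w @ r)"
  have "2 \<le> count_list (l @ w @ r) x" using assms(2,3) by simp
  note x = cubefree_rigid_witness[OF lwr this]
  from x(1) assms(2) have lr: "x \<notin> set l" "x \<notin> set r"
    by (simp_all add: count_list_0_iff[symmetric])
  with x(2) show "x \<notin> set l \<and> x \<notin> set r \<and> distinct (l @ filter (\<lambda>y. y \<noteq> x) w @ r)"
    unfolding filter_neq_infix[OF lr] by blast
next
  assume "x \<notin> set l \<and> x \<notin> set r \<and> distinct (l @ filter (\<lambda>y. y \<noteq> x) w @ r)"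
  then have lr: "x \<notin> set l" "x \<notin> set r" and d: "distinct (l @ filter (\<lambda>y. y \<noteq> x) w @ r)"
    by blast+
  have "2 \<le> count_list w x" using assms(2,3) by simp
  note x = cubefree_rigid_witness[OF assms(1) this]
  have "count_list (l @ w @ r) x \<le> k" using lr x(1) by simp
  moreover have "distinct (filter (\<lambda>y. y \<noteq> x) (l @ w @ r))"
    unfolding filter_neq_infix[OF lr] by (rule d)
  moreover have "\<forall>e\<in>set (runs x (l @ w @ r)). e < 3"
    unfolding runs_infix[OF lr] using x(3) by auto
  ultimately show "cubefree_rigid k (l @ w @ r)"
    unfolding cubefree_rigid_def by blast
qed

lemma not_cubefree_rigid_replicate:
  assumes "3 \<le> m"
  shows "\<not> cubefree_rigid k (replicate m y)"
proof
  assume "cubefree_rigid k (replicate m y)"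
  then obtain x where d: "distinct (filter (\<lambda>z. z \<noteq> x) (replicate m y))"
    and r: "\<forall>e\<in>set (runs x (replicate m y)). e < 3"
    unfolding cubefree_rigid_def by blast
  show False
  proof (cases "x = y")
    case True then show ?thesis using r assms runs_replicate[of y m] by auto
  next
    case False
    then have "filter (\<lambda>z. z \<noteq> x) (replicate m y) = replicate m y" by simp
    then show ?thesis using d assms by (cases m) auto
  qed
qed

lemma cubefree_rigid_commute:
  assumes "cubefree_rigid k w"
    and "\<And>a. 2 * count_list p a \<le> count_list w a" and "\<And>a. 2 * count_list q a \<le> count_list w a"
  shows "p @ q = q @ p"
proof -
  obtain x where x: "\<And>a. 2 \<le> count_list w a \<Longrightarrow> a = x"
    using cubefree_rigid_repeated_letter[OF assms(1)] by blast
  have "\<exists>i. s = replicate i x" if "\<And>a. 2 * count_list s a \<le> count_list w a" for s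
  proof -
    have "a = x" if "a \<in> set s" for a
    proof (rule x)
      have "1 \<le> count_list s a" using \<open>a \<in> set s\<close> count_list_0_iff[of s a] by simp
      then show "2 \<le> count_list w a"
        using \<open>\<And>a. 2 * count_list s a \<le> count_list w a\<close>[of a] by linarith
    qed
    then show ?thesis using replicate_length_same[of s x] by metis
  qed
  then obtain i j where "p = replicate i x" "q = replicate j x"
    using assms(2,3) by meson
  then show ?thesis by (simp flip: replicate_add add: add.commute)
qed

lemma concat_replicate_replicate: "concat (replicate m (replicate l x)) = replicate (m * l) x"
  by (induction m) (auto simp: replicate_add)

lemma count_list_concat_replicate: "count_list (concat (replicate m p)) a = m * count_list p a"
  by (induction m) auto

lemma cubefree_rigid_power_Nil:
  assumes "cubefree_rigid k (concat (replicate m p))" and "3 \<le> m"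
  shows "p = []"
proof (rule ccontr)
  assume "p \<noteq> []"
  have "2 \<le> count_list (concat (replicate m p)) a" if "a \<in> set p" for a
  proof -
    have "1 \<le> count_list p a" using that count_list_0_iff[of p a] by simp
    then show ?thesis
      using assms(2) mult_le_mono[of 3 m 1 "count_list p a"]
      by (simp add: count_list_concat_replicate)
  qed
  moreover obtain x where "\<And>a. 2 \<le> count_list (concat (replicate m p)) a \<Longrightarrow> a = x"
    using cubefree_rigid_repeated_letter[OF assms(1)] by blast
  ultimately have "\<forall>a\<in>set p. a = x" by blast
  then obtain l where p: "p = replicate l x"
    using replicate_length_same[of p x] by metis
  with assms(1) have "cubefree_rigid k (replicate (m * l) x)"
    by (simp add: concat_replicate_replicate)
  moreover have "3 \<le> m * l"
    using assms(2) \<open>p \<noteq> []\<close> p mult_le_mono[of 3 m 1 l] by (simp add: Suc_le_eq)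
  ultimately show False using not_cubefree_rigid_replicate[of "m * l" k x] by blast
qed

lemma cubefree_rigid_Nil_if_count:
  assumes "cubefree_rigid k w" and "1 \<le> k" and "k < m"
    and "\<And>a. m * count_list p a \<le> count_list w a"
  shows "p = []"
proof (rule ccontr)
  assume "p \<noteq> []"
  then obtain a where "a \<in> set p" by (cases p) auto
  then have "1 \<le> count_list p a" using count_list_0_iff[of p a] by simp
  then have "m * 1 \<le> m * count_list p a" by (rule mult_le_mono2)
  also have "\<dots> \<le> count_list w a" by (rule assms(4))
  also have "\<dots> \<le> k" by (rule count_list_le_if_cubefree_rigid[OF assms(1,2)])
  finally have "m \<le> k" by simp
  with assms(3) show False by linarith
qed

section \<open>Quotients of the free monoid\<close>

definition subst_word :: "(nat \<Rightarrow> word) \<Rightarrow> word \<Rightarrow> word" where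
  "subst_word \<sigma> w = concat (map \<sigma> w)"

lemma subst_word_simps [simp]:
  "subst_word \<sigma> [] = []"
  "subst_word \<sigma> (a # w) = \<sigma> a @ subst_word \<sigma> w"
  "subst_word \<sigma> (u @ w) = subst_word \<sigma> u @ subst_word \<sigma> w"
  by (simp_all add: subst_word_def)

lemma subst_word_replicate: "subst_word \<sigma> (replicate m a) = concat (replicate m (\<sigma> a))"
  by (induction m) auto

lemma subst_word_concat: "subst_word \<sigma> (concat ws) = concat (map (subst_word \<sigma>) ws)"
  by (induction ws) auto

definition word_congruence :: "(word \<Rightarrow> nat) \<Rightarrow> bool" where
  "word_congruence V \<longleftrightarrow> (\<forall>l w w' r. V w = V w' \<longrightarrow> V (l @ w @ r) = V (l @ w' @ r))"

definition quotient_monoid :: "(word \<Rightarrow> nat) \<Rightarrow> nat monoid" where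
  "quotient_monoid V =
     \<lparr>carrier = range V, mult = (\<lambda>a b. V (inv_into UNIV V a @ inv_into UNIV V b)), one = V []\<rparr>"

lemma quotient_monoid_mult:
  assumes "word_congruence V"
  shows "V a \<otimes>\<^bsub>quotient_monoid V\<^esub> V b = V (a @ b)"
proof -
  have "V (inv_into UNIV V (V a) @ inv_into UNIV V (V b)) = V (a @ inv_into UNIV V (V b))"
    using assms f_inv_into_f[of "V a" V UNIV] unfolding word_congruence_def
    by (metis append_Nil rangeI)
  also have "\<dots> = V (a @ b)"
    using assms f_inv_into_f[of "V b" V UNIV] unfolding word_congruence_def
    by (metis append_Nil2 rangeI)
  finally show ?thesis by (simp add: quotient_monoid_def)
qed

lemma monoid_quotient_monoid:
  assumes "word_congruence V"
  shows "monoid (quotient_monoid V)"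
proof (rule monoidI)
  fix x y z assume "x \<in> carrier (quotient_monoid V)" "y \<in> carrier (quotient_monoid V)"
    "z \<in> carrier (quotient_monoid V)"
  then obtain a b c where "x = V a" "y = V b" "z = V c"
    by (auto simp: quotient_monoid_def)
  then show "x \<otimes>\<^bsub>quotient_monoid V\<^esub> y \<otimes>\<^bsub>quotient_monoid V\<^esub> z =
      x \<otimes>\<^bsub>quotient_monoid V\<^esub> (y \<otimes>\<^bsub>quotient_monoid V\<^esub> z)"
    by (simp add: quotient_monoid_mult[OF assms])
next
  fix x assume "x \<in> carrier (quotient_monoid V)"
  then show "\<one>\<^bsub>quotient_monoid V\<^esub> \<otimes>\<^bsub>quotient_monoid V\<^esub> x = x"
    and "x \<otimes>\<^bsub>quotient_monoid V\<^esub> \<one>\<^bsub>quotient_monoid V\<^esub> = x"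
    using quotient_monoid_mult[OF assms, of "[]"] quotient_monoid_mult[OF assms, of _ "[]"]
    by (auto simp: quotient_monoid_def)
qed (auto simp: quotient_monoid_def)

lemma eval_word_quotient_monoid:
  assumes "word_congruence V"
  shows "eval_word (quotient_monoid V) (\<lambda>y. V (\<sigma> y)) w = V (subst_word \<sigma> w)"
proof (induction w)
  case Nil then show ?case by (simp add: eval_word_def quotient_monoid_def)
next
  case (Cons a w)
  then show ?case
    using quotient_monoid_mult[OF assms] by (simp add: eval_word_def)
qed

lemma sat_id_quotient_monoid_iff:
  assumes "word_congruence V"
  shows "sat_id (quotient_monoid V) (u, v) \<longleftrightarrow> (\<forall>\<sigma>. V (subst_word \<sigma> u) = V (subst_word \<sigma> v))"
proof
  assume sat: "sat_id (quotient_monoid V) (u, v)"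
  show "\<forall>\<sigma>. V (subst_word \<sigma> u) = V (subst_word \<sigma> v)"
  proof
    fix \<sigma> :: "nat \<Rightarrow> word"
    have "\<forall>y. V (\<sigma> y) \<in> carrier (quotient_monoid V)" by (simp add: quotient_monoid_def)
    with sat show "V (subst_word \<sigma> u) = V (subst_word \<sigma> v)"
      unfolding sat_id_def eval_word_quotient_monoid[OF assms, symmetric] by simp
  qed
next
  assume A: "\<forall>\<sigma>. V (subst_word \<sigma> u) = V (subst_word \<sigma> v)"
  show "sat_id (quotient_monoid V) (u, v)" unfolding sat_id_def
  proof (intro allI impI)
    fix h :: "nat \<Rightarrow> nat" assume "\<forall>x. h x \<in> carrier (quotient_monoid V)"
    then have "h = (\<lambda>y. V (inv_into UNIV V (h y)))"
      by (auto simp: quotient_monoid_def f_inv_into_f)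
    then show "eval_word (quotient_monoid V) h (fst (u, v)) =
        eval_word (quotient_monoid V) h (snd (u, v))"
      using A eval_word_quotient_monoid[OF assms] by (metis fst_conv snd_conv)
  qed
qed

section \<open>The model and the identities of C_n\<close>

definition d_exponent :: "nat \<Rightarrow> nat \<Rightarrow> nat" where
  "d_exponent j i = (if i = j then 1 else 2)"

definition d_exponents :: "nat \<Rightarrow> nat \<Rightarrow> nat list" where
  "d_exponents n j = map (d_exponent j) [0..<n]"

definition d_class :: "nat \<Rightarrow> (word \<times> word) set \<Rightarrow> nat \<Rightarrow> nat set" where
  "d_class n \<pi> j = {k. k < n \<and> (d_word n j, d_word n k) \<in> \<pi>}"

(* pi-classes of indices are stored as sorted lists to keep the type countable. *)
definition exponent_class :: "nat \<Rightarrow> (word \<times> word) set \<Rightarrow> nat list \<Rightarrow> nat list + nat list" where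
  "exponent_class n \<pi> es =
     (if \<exists>j<n. es = d_exponents n j
      then Inl (sorted_list_of_set (d_class n \<pi> (THE j. j < n \<and> es = d_exponents n j)))
      else Inr es)"

definition shape :: "nat \<Rightarrow> (word \<times> word) set \<Rightarrow> word \<Rightarrow>
    word + nat \<times> word \<times> bool list \<times> (nat list + nat list)" where
  "shape n \<pi> w =
     (if \<exists>x. count_list w x = 2 * n - 1 then
        let x = (SOME x. count_list w x = 2 * n - 1); es = runs x w in
        Inr (x, filter (\<lambda>y. y \<noteq> x) w, map (\<lambda>e. e = 0) es,
             exponent_class n \<pi> (filter (\<lambda>e. e \<noteq> 0) es))
      else Inl w)"

(* None is the zero of the monoid; to_nat puts the carrier into nat, as variety_satisfies
   requires. *)
definition word_class :: "nat \<Rightarrow> (word \<times> word) set \<Rightarrow> word \<Rightarrow> nat" where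
  "word_class n \<pi> w = to_nat (if cubefree_rigid (2 * n - 1) w then Some (shape n \<pi> w) else None)"

lemma shape_eq:
  assumes "2 \<le> n" and "cubefree_rigid (2 * n - 1) w" and "count_list w x = 2 * n - 1"
  shows "shape n \<pi> w = Inr (x, filter (\<lambda>y. y \<noteq> x) w, map (\<lambda>e. e = 0) (runs x w),
           exponent_class n \<pi> (filter (\<lambda>e. e \<noteq> 0) (runs x w)))"
proof -
  obtain z where z: "\<And>a. 2 \<le> count_list w a \<Longrightarrow> a = z"
    using cubefree_rigid_repeated_letter[OF assms(2)] by blast
  have "count_list w (SOME x. count_list w x = 2 * n - 1) = 2 * n - 1"
    using assms(3) by (rule someI)
  moreover have two: "2 \<le> 2 * n - 1" using assms(1) by simp
  ultimately have "(SOME x. count_list w x = 2 * n - 1) = z" by (intro z) simp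
  moreover have "x = z" using assms(3) two by (intro z) simp
  ultimately have "(SOME x. count_list w x = 2 * n - 1) = x" by simp
  with assms(3) show ?thesis unfolding shape_def by (auto simp: Let_def)
qed

lemma shape_InlD: "shape n \<pi> w = Inl w' \<Longrightarrow> w' = w"
  unfolding shape_def by (auto simp: Let_def split: if_splits)

lemma shape_InrD:
  assumes "2 \<le> n" and "cubefree_rigid (2 * n - 1) w" and "shape n \<pi> w = Inr (x, s)"
  shows "count_list w x = 2 * n - 1"
    and "s = (filter (\<lambda>y. y \<noteq> x) w, map (\<lambda>e. e = 0) (runs x w),
           exponent_class n \<pi> (filter (\<lambda>e. e \<noteq> 0) (runs x w)))"
proof -
  obtain x' where x': "count_list w x' = 2 * n - 1"
    using assms(3) unfolding shape_def by (auto split: if_splits)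
  with assms show "count_list w x = 2 * n - 1"
    and "s = (filter (\<lambda>y. y \<noteq> x) w, map (\<lambda>e. e = 0) (runs x w),
           exponent_class n \<pi> (filter (\<lambda>e. e \<noteq> 0) (runs x w)))"
    using shape_eq[OF assms(1,2) x', of \<pi>] by auto
qed

lemma shape_infix:
  assumes "2 \<le> n" and "cubefree_rigid (2 * n - 1) (l @ w @ r)" and "count_list w x = 2 * n - 1"
  shows "shape n \<pi> (l @ w @ r) =
    Inr (x, l @ filter (\<lambda>y. y \<noteq> x) w @ r,
         replicate (length l) True @ map (\<lambda>e. e = 0) (runs x w) @ replicate (length r) True,
         exponent_class n \<pi> (filter (\<lambda>e. e \<noteq> 0) (runs x w)))"
proof -
  have w: "cubefree_rigid (2 * n - 1) w" using assms(2) by (rule cubefree_rigid_infixD)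
  have lr: "x \<notin> set l" "x \<notin> set r"
    using assms cubefree_rigid_infix_iff[OF w assms(3)] by simp_all
  then have "count_list (l @ w @ r) x = 2 * n - 1" using assms(3) by simp
  moreover have "filter (\<lambda>e. e \<noteq> 0) (replicate m (0::nat)) = []" for m by simp
  ultimately show ?thesis
    unfolding shape_eq[OF assms(1,2) \<open>count_list (l @ w @ r) x = 2 * n - 1\<close>]
      runs_infix[OF lr] filter_neq_infix[OF lr]
    by (simp add: map_replicate)
qed

lemma word_class_eq_iff:
  "word_class n \<pi> u = word_class n \<pi> v \<longleftrightarrow>
    (cubefree_rigid (2 * n - 1) u \<longleftrightarrow> cubefree_rigid (2 * n - 1) v) \<and>
    (cubefree_rigid (2 * n - 1) u \<longrightarrow> shape n \<pi> u = shape n \<pi> v)"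
  unfolding word_class_def by auto

lemma word_class_eqI:
  assumes "cubefree_rigid (2 * n - 1) u \<Longrightarrow> u = v" and "cubefree_rigid (2 * n - 1) v \<Longrightarrow> u = v"
  shows "word_class n \<pi> u = word_class n \<pi> v"
  using assms unfolding word_class_eq_iff by blast

lemma word_class_infix_cong:
  assumes n: "2 \<le> n" and w: "cubefree_rigid (2 * n - 1) w" and w': "cubefree_rigid (2 * n - 1) w'"
    and shape: "shape n \<pi> w = shape n \<pi> w'"
  shows "word_class n \<pi> (l @ w @ r) = word_class n \<pi> (l @ w' @ r)"
proof (cases "shape n \<pi> w")
  case (Inl w0)
  with shape have "w = w'" using shape_InlD by metis
  then show ?thesis by simp
next
  case (Inr s)
  obtain x T P c where s: "s = (x, T, P, c)" by (cases s) auto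
  note x = shape_InrD[OF n w Inr[unfolded s]]
  note x' = shape_InrD[OF n w' shape[symmetric, unfolded Inr s]]
  have eqs: "filter (\<lambda>y. y \<noteq> x) w = filter (\<lambda>y. y \<noteq> x) w'"
    "map (\<lambda>e. e = 0) (runs x w) = map (\<lambda>e. e = 0) (runs x w')"
    "exponent_class n \<pi> (filter (\<lambda>e. e \<noteq> 0) (runs x w)) =
     exponent_class n \<pi> (filter (\<lambda>e. e \<noteq> 0) (runs x w'))"
    using x(2) x'(2) by simp_all
  have two: "2 \<le> 2 * n - 1" using n by simp
  have "cubefree_rigid (2 * n - 1) (l @ w @ r) \<longleftrightarrow> cubefree_rigid (2 * n - 1) (l @ w' @ r)"
    unfolding cubefree_rigid_infix_iff[OF w x(1) two] cubefree_rigid_infix_iff[OF w' x'(1) two]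
    by (simp only: eqs)
  moreover have "shape n \<pi> (l @ w @ r) = shape n \<pi> (l @ w' @ r)"
    if "cubefree_rigid (2 * n - 1) (l @ w @ r)"
    using that calculation
    unfolding shape_infix[OF n that x(1)] by (simp only: shape_infix[OF n _ x'(1)] eqs)
  ultimately show ?thesis unfolding word_class_eq_iff by blast
qed

lemma word_congruence_word_class:
  assumes n: "2 \<le> n"
  shows "word_congruence (word_class n \<pi>)"
  unfolding word_congruence_def
proof (intro allI impI)
  fix l w w' r
  assume "word_class n \<pi> w = word_class n \<pi> w'"
  then have W: "cubefree_rigid (2 * n - 1) w \<longleftrightarrow> cubefree_rigid (2 * n - 1) w'"
    and S: "cubefree_rigid (2 * n - 1) w \<Longrightarrow> shape n \<pi> w = shape n \<pi> w'"
    unfolding word_class_eq_iff by blast+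
  show "word_class n \<pi> (l @ w @ r) = word_class n \<pi> (l @ w' @ r)"
  proof (cases "cubefree_rigid (2 * n - 1) w")
    case True
    with W S show ?thesis using word_class_infix_cong[OF n] by blast
  next
    case False
    with W show ?thesis unfolding word_class_eq_iff using cubefree_rigid_infixD by blast
  qed
qed

lemma word_class_swap:
  assumes "\<And>a. 2 * count_list p a \<le> count_list (l @ p @ q @ r) a"
    and "\<And>a. 2 * count_list q a \<le> count_list (l @ p @ q @ r) a"
  shows "word_class n \<pi> (l @ p @ q @ r) = word_class n \<pi> (l @ q @ p @ r)"
proof (rule word_class_eqI)
  have same: "count_list (l @ q @ p @ r) a = count_list (l @ p @ q @ r) a" for a by simp
  show "l @ p @ q @ r = l @ q @ p @ r" if "cubefree_rigid (2 * n - 1) (l @ p @ q @ r)"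
    using cubefree_rigid_commute[OF that assms] by simp
  show "l @ p @ q @ r = l @ q @ p @ r" if "cubefree_rigid (2 * n - 1) (l @ q @ p @ r)"
  proof -
    have "p @ q = q @ p" by (rule cubefree_rigid_commute[OF that]) (simp_all only: same assms)
    then show ?thesis by simp
  qed
qed

lemma O_ids_word_class:
  assumes "(u, v) \<in> O_ids"
  shows "word_class n \<pi> (subst_word \<sigma> u) = word_class n \<pi> (subst_word \<sigma> v)"
proof -
  have "word_class n \<pi> ([] @ \<sigma> 0 @ \<sigma> 1 @ \<sigma> 2 @ \<sigma> 0 @ \<sigma> 3 @ \<sigma> 1) =
      word_class n \<pi> ([] @ \<sigma> 1 @ \<sigma> 0 @ \<sigma> 2 @ \<sigma> 0 @ \<sigma> 3 @ \<sigma> 1)"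
    by (rule word_class_swap) auto
  moreover have "word_class n \<pi> ((\<sigma> 0 @ \<sigma> 2) @ \<sigma> 0 @ \<sigma> 1 @ \<sigma> 3 @ \<sigma> 1) =
      word_class n \<pi> ((\<sigma> 0 @ \<sigma> 2) @ \<sigma> 1 @ \<sigma> 0 @ \<sigma> 3 @ \<sigma> 1)"
    by (rule word_class_swap) auto
  moreover have "word_class n \<pi> ((\<sigma> 0 @ \<sigma> 2 @ \<sigma> 1 @ \<sigma> 3) @ \<sigma> 0 @ \<sigma> 1 @ []) =
      word_class n \<pi> ((\<sigma> 0 @ \<sigma> 2 @ \<sigma> 1 @ \<sigma> 3) @ \<sigma> 1 @ \<sigma> 0 @ [])"
    by (rule word_class_swap) auto
  ultimately show ?thesis using assms unfolding O_ids_def by auto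
qed

lemma count_list_concat_map_append:
  "length L * count_list p a \<le> count_list (concat (map (\<lambda>i. \<tau> i @ p) L)) a"
  by (induction L) auto

lemma C_ids_word_class:
  assumes n: "2 \<le> n" and uv: "(u, v) \<in> C_ids n"
  shows "word_class n \<pi> (subst_word \<sigma> u) = word_class n \<pi> (subst_word \<sigma> v)"
proof -
  let ?p = "\<sigma> 0"
  have "word_class n \<pi> (concat (replicate 4 ?p)) = word_class n \<pi> (concat (replicate 3 ?p))"
    by (rule word_class_eqI; drule cubefree_rigid_power_Nil) simp_all
  moreover have "word_class n \<pi> (concat (replicate 3 ?p) @ \<sigma> 1) =
      word_class n \<pi> (\<sigma> 1 @ concat (replicate 3 ?p))"
    by (rule word_class_eqI; drule cubefree_rigid_appendD; drule cubefree_rigid_power_Nil) simp_all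
  moreover have "word_class n \<pi> (concat (replicate (2 * n) ?p) @ subst_word \<sigma> [1..<2 * n + 1]) =
      word_class n \<pi> (concat (map (\<lambda>i. \<sigma> i @ ?p) [1..<2 * n + 1]))"
  proof -
    have k: "1 \<le> 2 * n - 1" "2 * n - 1 < 2 * n" using n by simp_all
    have "?p = []"
      if "cubefree_rigid (2 * n - 1) (concat (replicate (2 * n) ?p) @ subst_word \<sigma> [1..<2 * n + 1])"
      using cubefree_rigid_Nil_if_count[OF that k] by (simp add: count_list_concat_replicate)
    moreover have "?p = []"
      if "cubefree_rigid (2 * n - 1) (concat (map (\<lambda>i. \<sigma> i @ ?p) [1..<2 * n + 1]))"
      using cubefree_rigid_Nil_if_count[OF that k, where p = ?p]
        count_list_concat_map_append[where L = "[1..<2 * n + 1]" and p = ?p and \<tau> = \<sigma>]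
      by (simp del: upt_Suc)
    ultimately show ?thesis by (intro word_class_eqI) (simp_all add: subst_word_def)
  qed
  ultimately show ?thesis
    using uv O_ids_word_class unfolding C_ids_def
    by (auto simp: subst_word_replicate subst_word_concat comp_def simp del: upt_Suc)
qed

section \<open>Substitution instances of the words d_j\<close>

definition d_shaped :: "nat \<Rightarrow> (nat \<Rightarrow> word) \<Rightarrow> word \<Rightarrow> (nat \<Rightarrow> nat) \<Rightarrow> word" where
  "d_shaped n \<tau> p e = concat (map (\<lambda>i. \<tau> i @ concat (replicate (e i) p)) [0..<n])"

lemma subst_word_d_word:
  "subst_word \<sigma> (d_word n j) = d_shaped n (\<lambda>i. if i = 0 then [] else \<sigma> i) (\<sigma> 0) (d_exponent j)"
  unfolding d_word_def d_shaped_def subst_word_concat map_map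
  by (rule arg_cong[where f = concat], rule map_cong)
    (auto simp: subst_word_replicate d_exponent_def)

lemma d_word_eq_d_shaped:
  "d_word n j = d_shaped n (\<lambda>i. if i = 0 then [] else [i]) [0] (d_exponent j)"
proof -
  have "subst_word (\<lambda>i. [i]) w = w" for w by (induction w) auto
  then show ?thesis using subst_word_d_word[of "\<lambda>i. [i]" n j] by simp
qed

lemma d_shaped_Nil: "d_shaped n \<tau> [] e = concat (map \<tau> [0..<n])"
  by (simp add: d_shaped_def)

lemma count_list_d_shaped:
  "count_list (d_shaped n \<tau> p e) a =
    sum_list (map (\<lambda>i. count_list (\<tau> i) a) [0..<n]) + sum_list (map e [0..<n]) * count_list p a"
  unfolding d_shaped_def
  by (induction n) (auto simp: count_list_concat_replicate algebra_simps)

lemma sum_list_d_exponent: "j < n \<Longrightarrow> sum_list (map (d_exponent j) [0..<n]) = 2 * n - 1"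
proof -
  have "sum_list (map (d_exponent j) [0..<n]) = (if j < n then 2 * n - 1 else 2 * n)" for n
    by (induction n) (auto simp: d_exponent_def)
  then show "j < n \<Longrightarrow> ?thesis" by simp
qed

lemma count_list_d_shaped_letter:
  assumes "j < n" and "\<And>i. i < n \<Longrightarrow> x \<notin> set (\<tau> i)"
  shows "count_list (d_shaped n \<tau> [x] (d_exponent j)) x = 2 * n - 1"
proof -
  have "sum_list (map (\<lambda>i. count_list (\<tau> i) x) [0..<n]) = 0"
    using assms(2) by simp
  then show ?thesis by (simp add: count_list_d_shaped sum_list_d_exponent[OF assms(1)])
qed

lemma d_shaped_letter:
  assumes n: "2 \<le> n" and j: "j < n" and p: "p \<noteq> []"
    and w: "cubefree_rigid (2 * n - 1) (d_shaped n \<tau> p (d_exponent j))"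
  obtains x where "p = [x]" and "\<And>i. i < n \<Longrightarrow> x \<notin> set (\<tau> i)"
proof -
  let ?w = "d_shaped n \<tau> p (d_exponent j)"
  have cnt: "count_list ?w a =
      sum_list (map (\<lambda>i. count_list (\<tau> i) a) [0..<n]) + (2 * n - 1) * count_list p a" for a
    using count_list_d_shaped sum_list_d_exponent[OF j] by simp
  obtain x where x: "\<And>a. 2 \<le> count_list ?w a \<Longrightarrow> a = x"
    using cubefree_rigid_repeated_letter[OF w] by blast
  have "a = x" if "a \<in> set p" for a
  proof (rule x)
    have "1 \<le> count_list p a" using that count_list_0_iff[of p a] by simp
    then have "(2 * n - 1) * 1 \<le> (2 * n - 1) * count_list p a" by (rule mult_le_mono2)
    then show "2 \<le> count_list ?w a" using cnt[of a] n by linarith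
  qed
  then obtain m where pm: "p = replicate m x"
    using replicate_length_same[of p x] by metis
  with p have "1 \<le> m" by (cases m) auto
  have "count_list ?w x \<le> 2 * n - 1"
    using count_list_le_if_cubefree_rigid[OF w] n by simp
  moreover have "count_list p x = m" unfolding pm by (induction m) auto
  ultimately have le:
    "sum_list (map (\<lambda>i. count_list (\<tau> i) x) [0..<n]) + (2 * n - 1) * m \<le> 2 * n - 1"
    using cnt[of x] by simp
  have "m = 1"
  proof (rule ccontr)
    assume "m \<noteq> 1"
    with \<open>1 \<le> m\<close> have "(2 * n - 1) * 2 \<le> (2 * n - 1) * m" by (intro mult_le_mono2) simp
    with le n show False by linarith
  qed
  with le have "sum_list (map (\<lambda>i. count_list (\<tau> i) x) [0..<n]) = 0" by simp
  then have "x \<notin> set (\<tau> i)" if "i < n" for i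
    using that by (simp add: count_list_0_iff)
  with that pm \<open>m = 1\<close> show ?thesis by simp
qed

lemma upt_split_pair:
  assumes "1 \<le> i" and "i < n"
  shows "[0..<n] = [0..<i - 1] @ (i - 1) # i # [Suc i..<n]"
proof -
  have "[0..<n] = [0..<i - 1] @ [i - 1..<n]"
    using upt_add_eq_append[of 0 "i - 1" "n - (i - 1)"] assms by simp
  also have "[i - 1..<n] = (i - 1) # i # [Suc i..<n]"
    using assms by (simp add: upt_conv_Cons)
  finally show ?thesis .
qed

lemma d_shaped_nonempty:
  assumes w: "cubefree_rigid k (d_shaped n \<tau> [x] (d_exponent j))" and i: "1 \<le> i" "i < n"
  shows "\<tau> i \<noteq> []"
proof
  assume "\<tau> i = []"
  let ?g = "\<lambda>i. \<tau> i @ replicate (d_exponent j i) x"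
  let ?m = "d_exponent j (i - 1) + d_exponent j i"
  have "d_shaped n \<tau> [x] (d_exponent j) = concat (map ?g [0..<n])"
    by (simp add: d_shaped_def)
  also have "\<dots> = (concat (map ?g [0..<i - 1]) @ \<tau> (i - 1)) @ replicate ?m x @
      concat (map ?g [Suc i..<n])"
    unfolding upt_split_pair[OF i] using \<open>\<tau> i = []\<close> by (simp add: replicate_add)
  finally have "cubefree_rigid k ((concat (map ?g [0..<i - 1]) @ \<tau> (i - 1)) @ replicate ?m x @
      concat (map ?g [Suc i..<n]))"
    using w by (simp only:)
  then have "cubefree_rigid k (replicate ?m x)" by (rule cubefree_rigid_infixD)
  moreover have "3 \<le> ?m" using i by (auto simp: d_exponent_def)
  ultimately show False using not_cubefree_rigid_replicate[of ?m k x] by blast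
qed


lemma runs_blocks:
  assumes "\<forall>i\<in>set L. \<tau> i \<noteq> [] \<and> x \<notin> set (\<tau> i)"
  shows "runs x (concat (map (\<lambda>i. \<tau> i @ replicate (e i) x) L)) =
    0 # concat (map (\<lambda>i. replicate (length (\<tau> i) - 1) 0 @ [e i]) L)"
  using assms
proof (induction L)
  case (Cons i L)
  then have "\<tau> i \<noteq> []" "x \<notin> set (\<tau> i)" by auto
  with Cons show ?case
    by (cases "\<tau> i") (auto simp: runs_free_append runs_replicate_append)
qed simp

lemma filter_blocks:
  "\<forall>i\<in>set L. x \<notin> set (\<tau> i) \<Longrightarrow>
    filter (\<lambda>y. y \<noteq> x) (concat (map (\<lambda>i. \<tau> i @ replicate (e i) x) L)) = concat (map \<tau> L)"
  by (induction L) (auto simp: filter_neq_id)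

lemma zero_pattern_blocks:
  "\<forall>i\<in>set L. e i \<noteq> 0 \<Longrightarrow>
    map (\<lambda>e. e = 0) (concat (map (\<lambda>i. replicate (c i) 0 @ [e i]) L)) =
    concat (map (\<lambda>i. replicate (c i) True @ [False]) L)"
  by (induction L) (auto simp: map_replicate)

lemma nonzero_blocks:
  "\<forall>i\<in>set L. e i \<noteq> 0 \<Longrightarrow>
    filter (\<lambda>e. e \<noteq> 0) (concat (map (\<lambda>i. replicate (c i) 0 @ [e i]) L)) = map e L"
  by (induction L) auto

lemma d_shaped_singleton:
  assumes "1 \<le> n" and "\<tau> 0 = []"
  shows "d_shaped n \<tau> [x] e =
    replicate (e 0) x @ concat (map (\<lambda>i. \<tau> i @ replicate (e i) x) [1..<n])"
proof -
  have "[0..<n] = 0 # [1..<n]" using assms(1) by (simp add: upt_conv_Cons)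
  with assms(2) show ?thesis by (simp add: d_shaped_def)
qed

lemma runs_d_shaped:
  assumes "1 \<le> n" and "\<tau> 0 = []" and "\<forall>i\<in>set [1..<n]. \<tau> i \<noteq> [] \<and> x \<notin> set (\<tau> i)"
  shows "runs x (d_shaped n \<tau> [x] e) =
      e 0 # concat (map (\<lambda>i. replicate (length (\<tau> i) - 1) 0 @ [e i]) [1..<n])"
    and "filter (\<lambda>y. y \<noteq> x) (d_shaped n \<tau> [x] e) = concat (map \<tau> [1..<n])"
  using assms(3) runs_blocks[OF assms(3)] filter_blocks[of "[1..<n]" x \<tau> e]
  by (simp_all add: d_shaped_singleton[where \<tau> = \<tau>, OF assms(1,2)] runs_replicate_append)

lemma runs_d_word: "1 \<le> n \<Longrightarrow> runs 0 (d_word n j) = d_exponents n j"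
  and filter_d_word: "1 \<le> n \<Longrightarrow> filter (\<lambda>y. y \<noteq> 0) (d_word n j) = [1..<n]"
proof -
  assume n: "1 \<le> n"
  have "map (\<lambda>i. if i = 0 then [] else [i]) [Suc 0..<n] = map (\<lambda>i. [i]) [Suc 0..<n]"
    by (rule map_cong) auto
  then have "concat (map (\<lambda>i. if i = 0 then [] else [i]) [Suc 0..<n]) = [Suc 0..<n]"
    by (simp only: concat_map_singleton map_ident)
  moreover have "[0..<n] = 0 # [1..<n]" using n by (simp add: upt_conv_Cons)
  ultimately show "runs 0 (d_word n j) = d_exponents n j"
    and "filter (\<lambda>y. y \<noteq> 0) (d_word n j) = [1..<n]"
    using runs_d_shaped[OF n, of "\<lambda>i. if i = 0 then [] else [i]" 0 "d_exponent j"]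
    by (simp_all add: d_word_eq_d_shaped d_exponents_def cong: map_cong)
qed

lemma d_exponents_nonzero: "e \<in> set (d_exponents n j) \<Longrightarrow> e \<noteq> 0"
  by (auto simp: d_exponents_def d_exponent_def)

lemma zero_pattern_d_exponents: "map (\<lambda>e. e = 0) (d_exponents n j) = replicate n False"
  by (rule nth_equalityI) (auto simp: d_exponents_def d_exponent_def)

lemma nonzero_d_exponents: "filter (\<lambda>e. e \<noteq> 0) (d_exponents n j) = d_exponents n j"
  using d_exponents_nonzero by (auto intro: filter_True)

lemma d_exponents_inj: "j < n \<Longrightarrow> k < n \<Longrightarrow> d_exponents n j = d_exponents n k \<Longrightarrow> j = k"
  by (auto simp: d_exponents_def d_exponent_def dest!: map_eq_conv[THEN iffD1] split: if_splits)

lemma exponent_class_d_exponents: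
  assumes "j < n"
  shows "exponent_class n \<pi> (d_exponents n j) = Inl (sorted_list_of_set (d_class n \<pi> j))"
proof -
  have "(THE k. k < n \<and> d_exponents n j = d_exponents n k) = j"
    using assms d_exponents_inj by (intro the_equality) auto
  with assms show ?thesis unfolding exponent_class_def by auto
qed

lemma exponent_class_eq:
  assumes "equiv (D_set n) \<pi>" and "j < n" and "k < n" and "(d_word n j, d_word n k) \<in> \<pi>"
  shows "exponent_class n \<pi> (d_exponents n j) = exponent_class n \<pi> (d_exponents n k)"
proof -
  have "d_class n \<pi> j = d_class n \<pi> k"
    using assms(1,4) unfolding d_class_def by (auto elim!: equivE dest: symD transD)
  then show ?thesis using assms(2,3) by (simp add: exponent_class_d_exponents)
qed

lemma exponent_class_eq_d_exponentsD:
  assumes "equiv (D_set n) \<pi>" and "j < n"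
    and "exponent_class n \<pi> es = exponent_class n \<pi> (d_exponents n j)"
  obtains k where "k < n" and "es = d_exponents n k" and "(d_word n j, d_word n k) \<in> \<pi>"
proof -
  obtain k where k: "k < n" and es: "es = d_exponents n k"
    using assms(2,3) unfolding exponent_class_def by (auto split: if_splits)
  have "finite (d_class n \<pi> k)" "finite (d_class n \<pi> j)" by (simp_all add: d_class_def)
  with assms(2,3) k have "d_class n \<pi> k = d_class n \<pi> j"
    unfolding es exponent_class_d_exponents[OF k] exponent_class_d_exponents[OF assms(2)]
    by (metis sum.inject(1) sorted_list_of_set.set_sorted_key_list_of_set)
  moreover have "k \<in> d_class n \<pi> k"
    using assms(1) k unfolding d_class_def D_set_def by (auto elim!: equivE dest: refl_onD)
  ultimately show ?thesis using that k es unfolding d_class_def by blast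
qed


lemma shape_d_shaped:
  assumes n: "2 \<le> n" and j: "j < n" and \<tau>0: "\<tau> 0 = []"
    and \<tau>: "\<forall>i\<in>set [1..<n]. \<tau> i \<noteq> [] \<and> x \<notin> set (\<tau> i)"
    and d: "distinct (concat (map \<tau> [1..<n]))"
  shows "cubefree_rigid (2 * n - 1) (d_shaped n \<tau> [x] (d_exponent j))"
    and "shape n \<pi> (d_shaped n \<tau> [x] (d_exponent j)) =
      Inr (x, concat (map \<tau> [1..<n]),
           False # concat (map (\<lambda>i. replicate (length (\<tau> i) - 1) True @ [False]) [1..<n]),
           exponent_class n \<pi> (d_exponents n j))"
proof -
  let ?w = "d_shaped n \<tau> [x] (d_exponent j)"
  have "1 \<le> n" using n by simp
  note r = runs_d_shaped[OF this \<tau>0 \<tau>, of "d_exponent j"]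
  have u0: "[0..<n] = 0 # [1..<n]" using n by (simp add: upt_conv_Cons)
  have nz: "\<forall>i\<in>set [1..<n]. d_exponent j i \<noteq> 0" "d_exponent j 0 \<noteq> 0"
    by (auto simp: d_exponent_def)
  have "x \<notin> set (\<tau> i)" if "i < n" for i
    using \<tau>0 \<tau> that by (cases "i = 0") auto
  then have count: "count_list ?w x = 2 * n - 1" by (rule count_list_d_shaped_letter[OF j])
  show cube: "cubefree_rigid (2 * n - 1) ?w"
    unfolding cubefree_rigid_def
  proof (intro exI[of _ x] conjI)
    show "\<forall>e\<in>set (runs x ?w). e < 3"
      unfolding r(1) by (auto simp: d_exponent_def)
  qed (use count r(2) d in simp_all)
  have "filter (\<lambda>e. e \<noteq> 0) (runs x ?w) = d_exponents n j"
    unfolding r(1) using nonzero_blocks[OF nz(1)] nz(2) u0 by (simp add: d_exponents_def)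
  then show "shape n \<pi> ?w = Inr (x, concat (map \<tau> [1..<n]),
           False # concat (map (\<lambda>i. replicate (length (\<tau> i) - 1) True @ [False]) [1..<n]),
           exponent_class n \<pi> (d_exponents n j))"
    unfolding shape_eq[OF n cube count] r(2) using nz zero_pattern_blocks[OF nz(1)]
    by (simp add: r(1))
qed

lemma shape_d_word:
  assumes n: "2 \<le> n" and j: "j < n"
  shows "cubefree_rigid (2 * n - 1) (d_word n j)"
    and "shape n \<pi> (d_word n j) =
      Inr (0, [1..<n], replicate n False, exponent_class n \<pi> (d_exponents n j))"
proof -
  have n1: "1 \<le> n" using n by simp
  have count: "count_list (d_word n j) 0 = 2 * n - 1"
    using sum_list_runs[of 0 "d_word n j"] runs_d_word[OF n1] sum_list_d_exponent[OF j]
    by (simp add: d_exponents_def)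
  then show w: "cubefree_rigid (2 * n - 1) (d_word n j)"
    unfolding cubefree_rigid_def using runs_d_word[OF n1] filter_d_word[OF n1]
    by (intro exI[of _ 0]) (auto simp: d_exponents_def d_exponent_def)
  show "shape n \<pi> (d_word n j) =
      Inr (0, [1..<n], replicate n False, exponent_class n \<pi> (d_exponents n j))"
    unfolding shape_eq[OF n w count] runs_d_word[OF n1] filter_d_word[OF n1]
      zero_pattern_d_exponents nonzero_d_exponents ..
qed

lemma word_class_subst_d_word:
  assumes n: "2 \<le> n" and eq: "equiv (D_set n) \<pi>" and jk: "(d_word n j, d_word n k) \<in> \<pi>"
    and j: "j < n" and k: "k < n"
    and w: "cubefree_rigid (2 * n - 1) (subst_word \<sigma> (d_word n j))"
  shows "word_class n \<pi> (subst_word \<sigma> (d_word n j)) = word_class n \<pi> (subst_word \<sigma> (d_word n k))"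
proof (cases "\<sigma> 0 = []")
  case True
  then show ?thesis by (simp add: subst_word_d_word d_shaped_Nil)
next
  case False
  let ?\<tau> = "\<lambda>i. if i = 0 then [] else \<sigma> i"
  obtain x where x: "\<sigma> 0 = [x]" and free: "\<And>i. i < n \<Longrightarrow> x \<notin> set (?\<tau> i)"
    using d_shaped_letter[OF n j False w[unfolded subst_word_d_word]] by blast
  have wj: "cubefree_rigid (2 * n - 1) (d_shaped n ?\<tau> [x] (d_exponent j))"
    using w x by (simp add: subst_word_d_word)
  have \<tau>: "\<forall>i\<in>set [1..<n]. ?\<tau> i \<noteq> [] \<and> x \<notin> set (?\<tau> i)"
  proof
    fix i assume "i \<in> set [1..<n]"
    then have "1 \<le> i" "i < n" by auto
    then show "?\<tau> i \<noteq> [] \<and> x \<notin> set (?\<tau> i)"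
      using d_shaped_nonempty[OF wj] free by blast
  qed
  have "2 \<le> count_list (d_shaped n ?\<tau> [x] (d_exponent j)) x"
    using count_list_d_shaped_letter[OF j free] n by simp
  then have "distinct (filter (\<lambda>y. y \<noteq> x) (d_shaped n ?\<tau> [x] (d_exponent j)))"
    by (rule cubefree_rigid_witness(2)[OF wj])
  moreover have "filter (\<lambda>y. y \<noteq> x) (d_shaped n ?\<tau> [x] (d_exponent j)) = concat (map ?\<tau> [1..<n])"
    using runs_d_shaped(2)[of n ?\<tau> x "d_exponent j"] \<tau> n by simp
  ultimately have "distinct (concat (map ?\<tau> [1..<n]))" by simp
  note shapes = shape_d_shaped[OF n _ _ \<tau> this]
  show ?thesis
    unfolding word_class_eq_iff subst_word_d_word x
    using shapes[OF j] shapes[OF k] exponent_class_eq[OF eq j k jk] by simp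
qed

lemma Id_of_word_class:
  assumes n: "2 \<le> n" and eq: "equiv (D_set n) \<pi>" and uv: "(u, v) \<in> \<pi>"
  shows "word_class n \<pi> (subst_word \<sigma> u) = word_class n \<pi> (subst_word \<sigma> v)"
proof -
  from equiv_type[OF eq] obtain j k
    where j: "j < n" and k: "k < n" and u: "u = d_word n j" and v: "v = d_word n k"
    using uv unfolding D_set_def by blast
  have kj: "(v, u) \<in> \<pi>" using eq uv by (auto elim: equivE dest: symD)
  show ?thesis
  proof (cases "cubefree_rigid (2 * n - 1) (subst_word \<sigma> u)")
    case True
    then show ?thesis using word_class_subst_d_word[OF n eq _ j k] uv u v by simp
  next
    case False
    show ?thesis
    proof (cases "cubefree_rigid (2 * n - 1) (subst_word \<sigma> v)")
      case True
      then show ?thesis using word_class_subst_d_word[OF n eq _ k j] kj u v by simp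
    qed (use False in \<open>simp add: word_class_eq_iff\<close>)
  qed
qed

section \<open>Identities of C_n{Id(pi)}\<close>

lemma in_variety_word_class:
  assumes "2 \<le> n" and "equiv (D_set n) \<pi>"
  shows "in_variety (C_ids n \<union> Id_of \<pi>) (quotient_monoid (word_class n \<pi>))"
  unfolding in_variety_def
proof (intro conjI ballI)
  note cong = word_congruence_word_class[OF assms(1)]
  show "monoid (quotient_monoid (word_class n \<pi>))" by (rule monoid_quotient_monoid[OF cong])
  fix p assume "p \<in> C_ids n \<union> Id_of \<pi>"
  then show "sat_id (quotient_monoid (word_class n \<pi>)) p"
    using C_ids_word_class[OF assms(1)] Id_of_word_class[OF assms]
    unfolding Id_of_def by (cases p) (auto simp: sat_id_quotient_monoid_iff[OF cong])
qed

lemma shape_preserved: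
  assumes n: "2 \<le> n" and eq: "equiv (D_set n) \<pi>"
    and uv: "variety_satisfies (C_ids n \<union> Id_of \<pi>) (u, v)" and u: "cubefree_rigid (2 * n - 1) u"
  shows "cubefree_rigid (2 * n - 1) v" and "shape n \<pi> v = shape n \<pi> u"
proof -
  have all: "word_class n \<pi> (subst_word \<sigma> u) = word_class n \<pi> (subst_word \<sigma> v)" for \<sigma>
    using uv in_variety_word_class[OF n eq]
      sat_id_quotient_monoid_iff[OF word_congruence_word_class[OF n]]
    unfolding variety_satisfies_def by blast
  \<comment> \<open>Cubing the letters that do not occur in u forces v out of W unless it only uses letters of u.\<close>
  define \<sigma> where "\<sigma> y = (if y \<in> set u then [y] else replicate 3 y)" for y
  have subst_id: "subst_word \<sigma> w = w" if "set w \<subseteq> set u" for w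
    using that by (induction w) (auto simp: \<sigma>_def)
  have "word_class n \<pi> u = word_class n \<pi> (subst_word \<sigma> v)"
    using all[of \<sigma>] subst_id by simp
  with u have v: "cubefree_rigid (2 * n - 1) (subst_word \<sigma> v)"
    and s: "shape n \<pi> (subst_word \<sigma> v) = shape n \<pi> u"
    unfolding word_class_eq_iff by auto
  have "set v \<subseteq> set u"
  proof
    fix y assume "y \<in> set v"
    then obtain l r where "v = l @ y # r" by (meson split_list)
    moreover have "\<not> cubefree_rigid (2 * n - 1) (replicate 3 y)"
      by (rule not_cubefree_rigid_replicate) simp
    ultimately show "y \<in> set u"
      using v cubefree_rigid_infixD[of "2 * n - 1" "subst_word \<sigma> l" "\<sigma> y"]
      by (auto simp: \<sigma>_def split: if_splits)
  qed
  then show "cubefree_rigid (2 * n - 1) v" "shape n \<pi> v = shape n \<pi> u"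
    using v s subst_id by simp_all
qed

lemma d_word_preserved:
  assumes n: "2 \<le> n" and eq: "equiv (D_set n) \<pi>"
    and uv: "variety_satisfies (C_ids n \<union> Id_of \<pi>) (d_word n j, v)" and j: "j < n"
  obtains k where "k < n" and "v = d_word n k" and "(d_word n j, d_word n k) \<in> \<pi>"
proof -
  have n1: "1 \<le> n" using n by simp
  note v = shape_preserved[OF n eq uv shape_d_word(1)[OF n j]]
  note vs = shape_InrD[OF n v(1) v(2)[unfolded shape_d_word(2)[OF n j]]]
  then have filter_v: "filter (\<lambda>y. y \<noteq> 0) v = [1..<n]"
    and zeros_v: "map (\<lambda>e. e = 0) (runs 0 v) = replicate n False"
    and class_v: "exponent_class n \<pi> (filter (\<lambda>e. e \<noteq> 0) (runs 0 v)) =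
      exponent_class n \<pi> (d_exponents n j)"
    by simp_all
  obtain k where k: "k < n" and rk: "filter (\<lambda>e. e \<noteq> 0) (runs 0 v) = d_exponents n k"
    and jk: "(d_word n j, d_word n k) \<in> \<pi>"
    using exponent_class_eq_d_exponentsD[OF eq j class_v] by blast
  have "filter (\<lambda>y. y \<noteq> 0) v = filter (\<lambda>y. y \<noteq> 0) (d_word n k)"
    by (simp only: filter_v filter_d_word[OF n1])
  moreover have "runs 0 v = runs 0 (d_word n k)"
    unfolding runs_d_word[OF n1]
    by (rule runs_eqI) (simp_all only: zeros_v rk zero_pattern_d_exponents nonzero_d_exponents)
  ultimately have "v = d_word n k" by (rule eq_if_filter_runs_eq)
  from k this jk show ?thesis by (rule that)
qed

theorem lemma4p3:
  fixes n :: nat and \<pi> :: "(word \<times> word) set" and u v :: word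
  assumes "n \<ge> 2"
    and "equiv (D_set n) \<pi>"
    and "variety_satisfies (C_ids n \<union> Id_of \<pi>) (u, v)"
  shows "(limited_cubefree_rigid (2*n - 1) u \<longrightarrow> limited_cubefree_rigid (2*n - 1) v)
       \<and> (u \<in> D_set n \<longrightarrow> v \<in> D_set n \<and> (u, v) \<in> \<pi>)"
proof (rule conjI; intro impI)
  assume "limited_cubefree_rigid (2 * n - 1) u"
  then show "limited_cubefree_rigid (2 * n - 1) v"
    using shape_preserved(1)[OF assms] by (simp add: limited_cubefree_rigid_iff)
next
  assume "u \<in> D_set n"
  then obtain j where j: "j < n" and u: "u = d_word n j" unfolding D_set_def by blast
  obtain k where "k < n" and "v = d_word n k" and "(d_word n j, d_word n k) \<in> \<pi>"
    using d_word_preserved[OF assms(1,2) assms(3)[unfolded u] j] by blast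
  with u show "v \<in> D_set n \<and> (u, v) \<in> \<pi>" unfolding D_set_def by blast
qed

end
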